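(* Let $d\ge 2$ and let $G=(V,E)$ be any graph on $n$ vertices with maximum degree at most $d$. Let $\varepsilon>0$, let $p<(1-\varepsilon)/(d-1)$ be a contagion probability, and let $I_0\subseteq V$ be nonempty. Consider the Reed–Frost SIR process on $G$ with initial infectious set $I_0$ and contagion probability $p$. Then there is a constant $C>0$, depending only on $\varepsilon$, such that with high probability the process stops within $C\log n$ time steps and the total number of nodes that are ever infectious is at most $C|I_0|\log n$.
   Context: **Reed–Frost SIR process.** Let $G=(V,E)$ be a graph, $p\in[0,1]$ the contagion probability, and $I_0\subseteq V$ the initially infectious set. Time is discrete. At each time every node is in exactly one of three states: susceptible, infectious, or recovered. At time $0$ the nodes of $I_0$ are infectious and all other nodes are susceptible. At each step $t\to t+1$: - each node $u$ that is infectious at time $t$ independently, for each edge $\{u,v\}$ with $v$ susceptible at time $t$, infects $v$ with probability $p$; - a susceptible node infected by at least one neighbour becomes infectious at time $t+1$; - every node infectious at time $t$ becomes recovered at time $t+1$; - all other nodes keep their state. The process stops when there are no infectious nodes. **With high probability.** An event holds with high probability if it holds with probability at least $1-n^{-\Omega(1)}$, where $n=|V|$. *)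

theory Defs
  imports "HOL-Probability.Probability"
begin

text \<open>A state of the Reed-Frost SIR process is a pair (I, R) of the infectious and the
  recovered nodes; the susceptible nodes are V - I - R.\<close>

definition rf_step :: "(nat \<Rightarrow> nat \<Rightarrow> bool) \<Rightarrow> nat set \<Rightarrow> real \<Rightarrow> nat set \<times> nat set
    \<Rightarrow> (nat set \<times> nat set) pmf" where
  "rf_step E V p = (\<lambda>(I, R).
     let S = V - I - R in
     map_pmf (\<lambda>c. ({v \<in> S. \<exists>u\<in>I. E u v \<and> c (u, v)}, R \<union> I))
       (Pi_pmf {(u, v). u \<in> I \<and> v \<in> S \<and> E u v} False (\<lambda>_. bernoulli_pmf p)))"

fun rf_state :: "(nat \<Rightarrow> nat \<Rightarrow> bool) \<Rightarrow> nat set \<Rightarrow> real \<Rightarrow> nat set \<Rightarrow> nat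
    \<Rightarrow> (nat set \<times> nat set) pmf" where
  "rf_state E V p I0 0 = return_pmf (I0, {})"
| "rf_state E V p I0 (Suc t) = bind_pmf (rf_state E V p I0 t) (rf_step E V p)"

end

theory Submission
  imports Defs
begin

text \<open>Every new infection uses an edge from an infectious to a susceptible node, and the edges
  used are independent Bernoulli(p) trials. After the first step each infectious node has a
  recovered neighbour (the one that infected it), so it exposes at most d - 1 edges; hence the
  expected number of infectious nodes shrinks by the factor (d - 1) p \<le> 1 - \<epsilon> per step,
  and Markov's inequality shows extinction within O(log n) steps. For the outbreak size, the
  potential exp(\<alpha> |R| + \<beta> |I|) with \<alpha> + (1 - \<epsilon>)(exp \<beta> - 1) \<le> \<beta> is a supermartingale, since
  each infectious node trades the weight \<beta> for \<alpha> upon recovery and creates in expectation at most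
  (1 - \<epsilon>)(exp \<beta> - 1) weight of new infections; Markov's inequality for it bounds
  |I \<union> R| by O(|I0| log n) with high probability.\<close>

section \<open>Independent Bernoulli trials\<close>

lemma nn_integral_card_Pi_bernoulli:
  assumes "finite N" "0 \<le> p" "p \<le> 1"
  shows "(\<integral>\<^sup>+c. ennreal (real (card {x\<in>N. c x})) \<partial>Pi_pmf N False (\<lambda>_. bernoulli_pmf p))
         = ennreal (real (card N) * p)"
proof -
  have "(\<integral>\<^sup>+c. ennreal (real (card {x\<in>N. c x})) \<partial>Pi_pmf N False (\<lambda>_. bernoulli_pmf p))
     = (\<integral>\<^sup>+c. (\<Sum>x\<in>N. ennreal (if c x then 1 else 0)) \<partial>Pi_pmf N False (\<lambda>_. bernoulli_pmf p))"
    using assms(1) by (intro nn_integral_cong) (simp add: sum_ennreal sum.If_cases Int_def)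
  also have "\<dots> = (\<Sum>x\<in>N. \<integral>\<^sup>+c. ennreal (if c x then 1 else 0) \<partial>Pi_pmf N False (\<lambda>_. bernoulli_pmf p))"
    by (rule nn_integral_sum) auto
  also have "\<dots> = (\<Sum>x\<in>N. \<integral>\<^sup>+b. ennreal (if b then 1 else 0) \<partial>bernoulli_pmf p)"
  proof (rule sum.cong[OF refl])
    fix x assume "x \<in> N"
    have "(\<integral>\<^sup>+c. ennreal (if c x then 1 else 0) \<partial>Pi_pmf N False (\<lambda>_. bernoulli_pmf p))
        = (\<integral>\<^sup>+b. ennreal (if b then 1 else 0) \<partial>map_pmf (\<lambda>f. f x) (Pi_pmf N False (\<lambda>_. bernoulli_pmf p)))"
      by simp
    also have "\<dots> = (\<integral>\<^sup>+b. ennreal (if b then 1 else 0) \<partial>bernoulli_pmf p)"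
      using \<open>x \<in> N\<close> assms(1) by (simp only: Pi_pmf_component) simp
    finally show "(\<integral>\<^sup>+c. ennreal (if c x then 1 else 0) \<partial>Pi_pmf N False (\<lambda>_. bernoulli_pmf p))
        = (\<integral>\<^sup>+b. ennreal (if b then 1 else 0) \<partial>bernoulli_pmf p)" .
  qed
  also have "\<dots> = ennreal (real (card N) * p)"
    using assms by (simp add: ennreal_mult' ennreal_of_nat_eq_real_of_nat)
  finally show ?thesis .
qed

lemma nn_integral_exp_card_Pi_bernoulli:
  assumes "finite N" "0 \<le> p" "p \<le> 1"
  shows "(\<integral>\<^sup>+c. ennreal (exp (\<beta> * real (card {x\<in>N. c x}))) \<partial>Pi_pmf N False (\<lambda>_. bernoulli_pmf p))
         = ennreal ((1 + p * (exp \<beta> - 1)) ^ card N)"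
proof -
  have "(\<integral>\<^sup>+c. ennreal (exp (\<beta> * real (card {x\<in>N. c x}))) \<partial>Pi_pmf N False (\<lambda>_. bernoulli_pmf p))
     = (\<integral>\<^sup>+c. (\<Prod>x\<in>N. (\<lambda>x b. ennreal (if b then exp \<beta> else 1)) x (c x)) \<partial>Pi_pmf N False (\<lambda>_. bernoulli_pmf p))"
  proof (intro nn_integral_cong)
    fix c :: "'a \<Rightarrow> bool"
    have "exp (\<beta> * real (card {x\<in>N. c x})) = exp (\<Sum>x\<in>N. \<beta> * (if c x then 1 else 0))"
      using assms(1) by (simp add: sum.If_cases Int_def flip: sum_distrib_left)
    also have "\<dots> = (\<Prod>x\<in>N. if c x then exp \<beta> else 1)"
      using assms(1) by (simp add: exp_sum if_distrib cong: if_cong)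
    finally show "ennreal (exp (\<beta> * real (card {x\<in>N. c x})))
        = (\<Prod>x\<in>N. (\<lambda>x b. ennreal (if b then exp \<beta> else 1)) x (c x))"
      by (simp add: prod_ennreal)
  qed
  also have "\<dots> = (\<Prod>x\<in>N. \<integral>\<^sup>+b. ennreal (if b then exp \<beta> else 1) \<partial>bernoulli_pmf p)"
    by (rule nn_integral_prod_Pi_pmf[OF assms(1)])
  also have "\<dots> = (\<Prod>x\<in>N. ennreal (1 + p * (exp \<beta> - 1)))"
    using assms by (intro prod.cong) (auto simp: ennreal_mult'[symmetric] ennreal_plus[symmetric] algebra_simps)
  also have "\<dots> = ennreal ((1 + p * (exp \<beta> - 1)) ^ card N)"
  proof -
    have "0 \<le> (1 - p) + p * exp \<beta>" using assms by simp
    then show ?thesis by (simp add: ennreal_power algebra_simps)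
  qed
  finally show ?thesis .
qed

lemma pmf_Markov_inequality:
  fixes M :: "'a pmf" and f :: "'a \<Rightarrow> real"
  assumes "0 < a" "0 \<le> b" "\<And>s. s \<in> set_pmf M \<Longrightarrow> s \<in> A \<Longrightarrow> a \<le> f s"
    "\<And>s. s \<in> set_pmf M \<Longrightarrow> 0 \<le> f s" "(\<integral>\<^sup>+s. ennreal (f s) \<partial>M) \<le> ennreal b"
  shows "measure_pmf.prob M A \<le> b / a"
proof -
  have "ennreal (a * measure_pmf.prob M A) = (\<integral>\<^sup>+s. ennreal a * indicator A s \<partial>M)"
    using assms(1) by (simp add: measure_pmf.emeasure_eq_measure ennreal_mult' nn_integral_cmult_indicator)
  also have "\<dots> \<le> (\<integral>\<^sup>+s. ennreal (f s) \<partial>M)"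
    using assms by (intro nn_integral_mono_AE AE_pmfI) (auto simp: indicator_def intro: ennreal_leI)
  also have "\<dots> \<le> ennreal b" by (rule assms(5))
  finally have "a * measure_pmf.prob M A \<le> b" using assms(2) by (simp add: ennreal_le_iff)
  then show ?thesis using assms(1) by (simp add: field_simps)
qed

section \<open>One step of the process\<close>

definition sir_config :: "nat set \<Rightarrow> nat set \<Rightarrow> nat set \<Rightarrow> bool" where
  "sir_config V I R \<longleftrightarrow> I \<subseteq> V \<and> R \<subseteq> V \<and> I \<inter> R = {}"

definition infected_by_recovered :: "(nat \<Rightarrow> nat \<Rightarrow> bool) \<Rightarrow> nat set \<Rightarrow> nat set \<Rightarrow> bool" where
  "infected_by_recovered E I R \<longleftrightarrow> (\<forall>v\<in>I. \<exists>u\<in>R. E u v)"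

definition exposed_edges :: "(nat \<Rightarrow> nat \<Rightarrow> bool) \<Rightarrow> nat set \<Rightarrow> nat set \<Rightarrow> nat set \<Rightarrow> (nat \<times> nat) set" where
  "exposed_edges E V I R = {(u, v). u \<in> I \<and> v \<in> V - I - R \<and> E u v}"

definition sir_potential :: "real \<Rightarrow> real \<Rightarrow> nat set \<times> nat set \<Rightarrow> real" where
  "sir_potential \<alpha> \<beta> s = exp (\<alpha> * real (card (snd s)) + \<beta> * real (card (fst s)))"

lemma nn_integral_rf_step:
  "(\<integral>\<^sup>+s. F s \<partial>rf_step E V p (I, R)) =
   (\<integral>\<^sup>+c. F ({v\<in>V-I-R. \<exists>u\<in>I. E u v \<and> c (u, v)}, R \<union> I) \<partial>Pi_pmf (exposed_edges E V I R) False (\<lambda>_. bernoulli_pmf p))"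
  by (simp add: rf_step_def exposed_edges_def Let_def)

lemma set_pmf_rf_step:
  assumes "sir_config V I R" "(I', R') \<in> set_pmf (rf_step E V p (I, R))"
  shows "sir_config V I' R' \<and> infected_by_recovered E I' R'"
  using assms by (auto simp: rf_step_def Let_def sir_config_def infected_by_recovered_def)

lemma finite_exposed_edges: "finite V \<Longrightarrow> I \<subseteq> V \<Longrightarrow> finite (exposed_edges E V I R)"
  by (rule finite_subset[of _ "V \<times> V"]) (auto simp: exposed_edges_def)

lemma card_newly_infected_le:
  assumes "finite V" "I \<subseteq> V"
  shows "card {v\<in>V-I-R. \<exists>u\<in>I. E u v \<and> c (u, v)} \<le> card {x\<in>exposed_edges E V I R. c x}"
proof -
  have "{v\<in>V-I-R. \<exists>u\<in>I. E u v \<and> c (u, v)} \<subseteq> snd ` {x\<in>exposed_edges E V I R. c x}"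
    by (force simp: exposed_edges_def)
  moreover have "finite {x\<in>exposed_edges E V I R. c x}"
    using assms by (simp add: finite_exposed_edges)
  ultimately show ?thesis
    by (meson card_image_le card_mono finite_imageI order_trans)
qed

lemma card_exposed_edges_le:
  assumes "finite V" "I \<subseteq> V" "\<And>u. u \<in> I \<Longrightarrow> card {v\<in>V-I-R. E u v} \<le> k"
  shows "card (exposed_edges E V I R) \<le> k * card I"
proof -
  have "exposed_edges E V I R = Sigma I (\<lambda>u. {v\<in>V-I-R. E u v})" by (auto simp: exposed_edges_def)
  then have "card (exposed_edges E V I R) = (\<Sum>u\<in>I. card {v\<in>V-I-R. E u v})"
    using assms(1,2) by (simp add: card_SigmaI finite_subset)
  also have "\<dots> \<le> (\<Sum>u\<in>I. k)" by (intro sum_mono assms(3))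
  finally show ?thesis by (simp add: mult.commute)
qed

lemma nn_integral_card_infectious_rf_step:
  assumes "finite V" "I \<subseteq> V" "0 \<le> p" "p \<le> 1"
  shows "(\<integral>\<^sup>+s. ennreal (real (card (fst s))) \<partial>rf_step E V p (I, R))
      \<le> ennreal (p * real (card (exposed_edges E V I R)))"
proof -
  have "(\<integral>\<^sup>+s. ennreal (real (card (fst s))) \<partial>rf_step E V p (I, R)) \<le>
        (\<integral>\<^sup>+c. ennreal (real (card {x\<in>exposed_edges E V I R. c x})) \<partial>Pi_pmf (exposed_edges E V I R) False (\<lambda>_. bernoulli_pmf p))"
    unfolding nn_integral_rf_step using card_newly_infected_le[OF assms(1,2)]
    by (intro nn_integral_mono) (simp add: ennreal_leI)
  also have "\<dots> = ennreal (p * real (card (exposed_edges E V I R)))"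
    using assms by (simp add: nn_integral_card_Pi_bernoulli finite_exposed_edges mult.commute)
  finally show ?thesis .
qed

lemma nn_integral_sir_potential_rf_step:
  assumes "finite V" "sir_config V I R" "0 \<le> p" "p \<le> 1" "0 \<le> \<beta>"
  shows "(\<integral>\<^sup>+s. ennreal (sir_potential \<alpha> \<beta> s) \<partial>rf_step E V p (I, R))
     \<le> ennreal (exp (\<alpha> * real (card R + card I) + p * (exp \<beta> - 1) * real (card (exposed_edges E V I R))))"
proof -
  let ?N = "exposed_edges E V I R"
  have I: "I \<subseteq> V" and fin: "finite I" "finite R"
    using assms(1,2) by (auto simp: sir_config_def finite_subset)
  then have card_RI: "card (R \<union> I) = card R + card I"
    using assms(2) by (subst card_Un_disjoint) (auto simp: sir_config_def)
  define a where "a = exp (\<alpha> * real (card R + card I))"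
  have "(\<integral>\<^sup>+s. ennreal (sir_potential \<alpha> \<beta> s) \<partial>rf_step E V p (I, R)) \<le>
        (\<integral>\<^sup>+c. ennreal a * ennreal (exp (\<beta> * real (card {x\<in>?N. c x}))) \<partial>Pi_pmf ?N False (\<lambda>_. bernoulli_pmf p))"
    unfolding nn_integral_rf_step
  proof (intro nn_integral_mono)
    fix c :: "nat \<times> nat \<Rightarrow> bool"
    have "\<beta> * real (card {v\<in>V-I-R. \<exists>u\<in>I. E u v \<and> c (u, v)}) \<le> \<beta> * real (card {x\<in>?N. c x})"
      using card_newly_infected_le[OF assms(1) I] assms(5) by (intro mult_left_mono) auto
    then show "ennreal (sir_potential \<alpha> \<beta> ({v\<in>V-I-R. \<exists>u\<in>I. E u v \<and> c (u, v)}, R \<union> I))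
       \<le> ennreal a * ennreal (exp (\<beta> * real (card {x\<in>?N. c x})))"
      by (simp add: sir_potential_def a_def card_RI ennreal_mult'[symmetric] exp_add[symmetric] ennreal_leI)
  qed
  also have "\<dots> = ennreal a * ennreal ((1 + p * (exp \<beta> - 1)) ^ card ?N)"
    using assms I by (simp add: nn_integral_cmult nn_integral_exp_card_Pi_bernoulli finite_exposed_edges)
  also have "\<dots> \<le> ennreal a * ennreal (exp (p * (exp \<beta> - 1) * real (card ?N)))"
  proof (intro mult_left_mono ennreal_leI)
    have "(1 + p * (exp \<beta> - 1)) ^ card ?N \<le> exp (p * (exp \<beta> - 1)) ^ card ?N"
      using assms(3,5) by (intro power_mono) (auto simp: exp_ge_add_one_self add.commute)
    then show "(1 + p * (exp \<beta> - 1)) ^ card ?N \<le> exp (p * (exp \<beta> - 1) * real (card ?N))"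
      by (simp add: exp_of_nat_mult[symmetric] mult.commute)
  qed auto
  also have "\<dots> = ennreal (exp (\<alpha> * real (card R + card I) + p * (exp \<beta> - 1) * real (card ?N)))"
    by (simp add: a_def ennreal_mult'[symmetric] exp_add)
  finally show ?thesis .
qed

lemma extinction_bound_le_inverse:
  fixes \<epsilon> C m n :: real and t :: nat
  assumes "0 < \<epsilon>" "\<epsilon> \<le> 1" "5 \<le> \<epsilon> * C" "2 \<le> n" "1 \<le> ln n" "C * ln n - 2 \<le> real t"
    "0 \<le> m" "m \<le> n"
  shows "2 * (1 - \<epsilon>) ^ t * m \<le> 1 / n"
proof -
  have "(1 - \<epsilon>) ^ t \<le> exp (- \<epsilon>) ^ t"
    using assms(1,2) exp_ge_add_one_self[of "- \<epsilon>"] by (intro power_mono) auto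
  also have "\<dots> = exp (- (\<epsilon> * real t))" by (simp add: exp_of_nat_mult[symmetric] mult.commute)
  also have "\<dots> \<le> exp (- (3 * ln n))"
  proof -
    have "\<epsilon> * C * ln n - 2 * \<epsilon> \<le> \<epsilon> * real t"
      using mult_left_mono[OF assms(6), of \<epsilon>] assms(1) by (simp add: algebra_simps)
    moreover have "5 * ln n \<le> \<epsilon> * C * ln n" using assms(3,5) by (intro mult_right_mono) auto
    ultimately have "3 * ln n \<le> \<epsilon> * real t" using assms(2,5) by linarith
    then show ?thesis by simp
  qed
  also have "\<dots> = 1 / n ^ 3"
    using exp_of_nat_mult[of 3 "ln n"] assms(4) by (simp add: exp_minus inverse_eq_divide)
  finally have "2 * (1 - \<epsilon>) ^ t * m \<le> 2 * (1 / n ^ 3) * n"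
    using assms(1,2,7,8) by (intro mult_mono) auto
  also have "\<dots> \<le> 1 / n"
    using assms(4) by (simp add: field_simps power_eq_if)
  finally show ?thesis .
qed

lemma outbreak_bound_le_inverse:
  fixes \<alpha> C B m n :: real
  assumes "0 < \<alpha>" "2 \<le> \<alpha> * C" "B \<le> ln n" "0 \<le> ln n" "1 \<le> m" "0 < n"
  shows "exp (B * m) / exp (\<alpha> * (C * m * ln n)) \<le> 1 / n"
proof -
  have "B - \<alpha> * C * ln n \<le> - ln n"
    using assms(2-4) mult_right_mono[OF assms(2) assms(4)] by linarith
  moreover from this have "m * (B - \<alpha> * C * ln n) \<le> B - \<alpha> * C * ln n"
    using assms(4,5) mult_right_mono_neg[OF assms(5)] by fastforce
  ultimately have "exp (m * (B - \<alpha> * C * ln n)) \<le> exp (- ln n)" by simp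
  then show ?thesis
    using assms(6) by (simp add: exp_diff[symmetric] exp_minus algebra_simps inverse_eq_divide)
qed

lemma two_div_le_powr_neg_half:
  fixes n :: real
  assumes "4 \<le> n"
  shows "2 / n \<le> n powr (- (1 / 2))"
proof -
  have "2 \<le> sqrt n" using assms real_le_rsqrt by force
  then have "2 / (sqrt n * sqrt n) \<le> sqrt n / (sqrt n * sqrt n)"
    using assms by (intro divide_right_mono) auto
  then have "2 / n \<le> sqrt n / (sqrt n * sqrt n)"
    using assms by simp
  also have "\<dots> = n powr (- (1 / 2))"
    using assms by (simp add: powr_minus_divide powr_half_sqrt field_simps)
  finally show ?thesis .
qed

section \<open>The process on a graph of bounded degree\<close>

locale reed_frost =
  fixes E :: "nat \<Rightarrow> nat \<Rightarrow> bool" and V :: "nat set" and p :: real and I0 :: "nat set"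
    and d :: nat and \<epsilon> :: real
  assumes finite_V: "finite V"
    and E_sym: "\<forall>u v. E u v \<longrightarrow> u \<in> V \<and> v \<in> V \<and> u \<noteq> v \<and> E v u"
    and degree_le: "\<forall>v\<in>V. card {u \<in> V. E v u} \<le> d"
    and d_ge_2: "2 \<le> d"
    and I0_subset: "I0 \<subseteq> V"
    and p_nonneg: "0 \<le> p"
    and pred_d_mult_p_le: "real (d - 1) * p \<le> 1 - \<epsilon>"
    and \<epsilon>_pos: "0 < \<epsilon>"
begin

lemma p_le_1: "p \<le> 1"
  using mult_right_mono[of 1 "real (d - 1)" p] d_ge_2 p_nonneg pred_d_mult_p_le \<epsilon>_pos by simp

lemma \<epsilon>_le_1: "\<epsilon> \<le> 1"
  using pred_d_mult_p_le mult_nonneg_nonneg[OF of_nat_0_le_iff[of "d - 1"] p_nonneg] by linarith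

lemma d_mult_p_le_2: "real d * p \<le> 2"
proof -
  have "real d * p \<le> 2 * real (d - 1) * p"
    using d_ge_2 p_nonneg by (intro mult_right_mono) auto
  then show ?thesis using pred_d_mult_p_le \<epsilon>_pos by linarith
qed

lemma sir_config_initial: "sir_config V I0 {}"
  using I0_subset by (simp add: sir_config_def)

lemma set_pmf_rf_state:
  assumes "(I, R) \<in> set_pmf (rf_state E V p I0 (Suc t))"
  shows "sir_config V I R \<and> infected_by_recovered E I R"
  using assms
proof (induction t arbitrary: I R)
  case 0
  then show ?case using set_pmf_rf_step[OF sir_config_initial] by simp
next
  case (Suc t)
  then obtain I' R' where "(I', R') \<in> set_pmf (rf_state E V p I0 (Suc t))"
    and "(I, R) \<in> set_pmf (rf_step E V p (I', R'))"
    by auto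
  then show ?case using Suc.IH set_pmf_rf_step by blast
qed

lemma finite_infectious_rf_state:
  "(I, R) \<in> set_pmf (rf_state E V p I0 (Suc t)) \<Longrightarrow> finite I"
  using set_pmf_rf_state finite_V by (meson finite_subset sir_config_def)

lemma card_exposed_edges_initial: "card (exposed_edges E V I0 {}) \<le> d * card I0"
proof (rule card_exposed_edges_le[OF finite_V I0_subset])
  fix u assume "u \<in> I0"
  have "card {v\<in>V-I0-{}. E u v} \<le> card {v\<in>V. E u v}" using finite_V by (intro card_mono) auto
  also have "\<dots> \<le> d" using degree_le \<open>u \<in> I0\<close> I0_subset by auto
  finally show "card {v\<in>V-I0-{}. E u v} \<le> d" .
qed

lemma card_exposed_edges_le_pred:
  assumes "sir_config V I R" "infected_by_recovered E I R"
  shows "card (exposed_edges E V I R) \<le> (d - 1) * card I"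
proof (rule card_exposed_edges_le[OF finite_V])
  show "I \<subseteq> V" using assms(1) by (simp add: sir_config_def)
  fix u assume "u \<in> I"
  then obtain w where w: "w \<in> R" "E w u"
    using assms(2) by (auto simp: infected_by_recovered_def)
  then have "u \<in> V" "w \<in> V" "E u w" using E_sym by auto
  have "card {v\<in>V-I-R. E u v} \<le> card ({v\<in>V. E u v} - {w})"
    using finite_V w by (intro card_mono) auto
  also have "\<dots> = card {v\<in>V. E u v} - 1"
    using \<open>w \<in> V\<close> \<open>E u w\<close> finite_V by (subst card_Diff_singleton) auto
  also have "\<dots> \<le> d - 1" using degree_le \<open>u \<in> V\<close> by (simp add: diff_le_mono)
  finally show "card {v\<in>V-I-R. E u v} \<le> d - 1" .
qed

text \<open>The invariant \<^const>\<open>infected_by_recovered\<close> only holds from time 1 on, so the first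
  step is estimated separately.\<close>

lemma nn_integral_rf_state_le_pow:
  fixes f :: "nat set \<times> nat set \<Rightarrow> ennreal" and c :: ennreal
  assumes step: "\<And>I R. sir_config V I R \<Longrightarrow> infected_by_recovered E I R
      \<Longrightarrow> (\<integral>\<^sup>+s. f s \<partial>rf_step E V p (I, R)) \<le> c * f (I, R)"
  shows "(\<integral>\<^sup>+s. f s \<partial>rf_state E V p I0 (Suc t)) \<le> c ^ t * (\<integral>\<^sup>+s. f s \<partial>rf_step E V p (I0, {}))"
proof (induction t)
  case 0
  then show ?case by simp
next
  case (Suc t)
  have "(\<integral>\<^sup>+s. f s \<partial>rf_state E V p I0 (Suc (Suc t)))
      = (\<integral>\<^sup>+s. (\<integral>\<^sup>+s'. f s' \<partial>rf_step E V p s) \<partial>rf_state E V p I0 (Suc t))"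
    by (simp add: nn_integral_bind_pmf)
  also have "\<dots> \<le> (\<integral>\<^sup>+s. c * f s \<partial>rf_state E V p I0 (Suc t))"
    using set_pmf_rf_state step by (intro nn_integral_mono_AE AE_pmfI) (metis prod.collapse)
  also have "\<dots> = c * (\<integral>\<^sup>+s. f s \<partial>rf_state E V p I0 (Suc t))"
    by (rule nn_integral_cmult) simp
  also have "\<dots> \<le> c * (c ^ t * (\<integral>\<^sup>+s. f s \<partial>rf_step E V p (I0, {})))"
    by (intro mult_left_mono Suc.IH) auto
  finally show ?case by (simp add: mult.assoc)
qed

lemma card_infectious_rf_step_le:
  assumes "sir_config V I R" "infected_by_recovered E I R"
  shows "(\<integral>\<^sup>+s. ennreal (real (card (fst s))) \<partial>rf_step E V p (I, R))
      \<le> ennreal (1 - \<epsilon>) * ennreal (real (card I))"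
proof -
  have "(\<integral>\<^sup>+s. ennreal (real (card (fst s))) \<partial>rf_step E V p (I, R))
      \<le> ennreal (p * real (card (exposed_edges E V I R)))"
    using assms(1) p_nonneg p_le_1
    by (intro nn_integral_card_infectious_rf_step finite_V) (simp_all add: sir_config_def)
  also have "\<dots> \<le> ennreal ((1 - \<epsilon>) * real (card I))"
  proof (rule ennreal_leI)
    have "p * real (card (exposed_edges E V I R)) \<le> p * (real (d - 1) * real (card I))"
      using card_exposed_edges_le_pred[OF assms] p_nonneg
      by (intro mult_left_mono) (simp_all flip: of_nat_mult)
    also have "\<dots> = (real (d - 1) * p) * real (card I)" by (simp add: algebra_simps)
    also have "\<dots> \<le> (1 - \<epsilon>) * real (card I)"
      using pred_d_mult_p_le by (intro mult_right_mono) auto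
    finally show "p * real (card (exposed_edges E V I R)) \<le> (1 - \<epsilon>) * real (card I)" .
  qed
  also have "\<dots> = ennreal (1 - \<epsilon>) * ennreal (real (card I))"
    using \<epsilon>_le_1 by (simp add: ennreal_mult)
  finally show ?thesis .
qed

lemma card_infectious_rf_step_initial:
  "(\<integral>\<^sup>+s. ennreal (real (card (fst s))) \<partial>rf_step E V p (I0, {})) \<le> ennreal (2 * real (card I0))"
proof -
  have "(\<integral>\<^sup>+s. ennreal (real (card (fst s))) \<partial>rf_step E V p (I0, {}))
      \<le> ennreal (p * real (card (exposed_edges E V I0 {})))"
    using I0_subset p_nonneg p_le_1 by (intro nn_integral_card_infectious_rf_step finite_V)
  also have "\<dots> \<le> ennreal (2 * real (card I0))"
  proof (rule ennreal_leI)
    have "p * real (card (exposed_edges E V I0 {})) \<le> p * (real d * real (card I0))"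
      using card_exposed_edges_initial p_nonneg
      by (intro mult_left_mono) (simp_all flip: of_nat_mult)
    also have "\<dots> = (real d * p) * real (card I0)" by (simp add: algebra_simps)
    also have "\<dots> \<le> 2 * real (card I0)"
      using d_mult_p_le_2 by (intro mult_right_mono) auto
    finally show "p * real (card (exposed_edges E V I0 {})) \<le> 2 * real (card I0)" .
  qed
  finally show ?thesis .
qed

lemma nn_integral_card_infectious_le:
  "(\<integral>\<^sup>+s. ennreal (real (card (fst s))) \<partial>rf_state E V p I0 (Suc t))
      \<le> ennreal (2 * (1 - \<epsilon>) ^ t * real (card I0))"
proof -
  have "(\<integral>\<^sup>+s. ennreal (real (card (fst s))) \<partial>rf_state E V p I0 (Suc t))
      \<le> ennreal (1 - \<epsilon>) ^ t * (\<integral>\<^sup>+s. ennreal (real (card (fst s))) \<partial>rf_step E V p (I0, {}))"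
    by (rule nn_integral_rf_state_le_pow) (simp add: card_infectious_rf_step_le)
  also have "\<dots> \<le> ennreal (1 - \<epsilon>) ^ t * ennreal (2 * real (card I0))"
    by (intro mult_left_mono card_infectious_rf_step_initial) simp
  also have "\<dots> = ennreal (2 * (1 - \<epsilon>) ^ t * real (card I0))"
    using \<epsilon>_le_1 by (simp add: ennreal_power ennreal_mult mult.commute mult.left_commute)
  finally show ?thesis .
qed

lemma sir_potential_rf_step_le:
  assumes "0 \<le> \<beta>" "\<alpha> + (1 - \<epsilon>) * (exp \<beta> - 1) \<le> \<beta>"
    and "sir_config V I R" "infected_by_recovered E I R"
  shows "(\<integral>\<^sup>+s. ennreal (sir_potential \<alpha> \<beta> s) \<partial>rf_step E V p (I, R))
      \<le> ennreal (sir_potential \<alpha> \<beta> (I, R))"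
proof -
  let ?N = "exposed_edges E V I R"
  have "(\<integral>\<^sup>+s. ennreal (sir_potential \<alpha> \<beta> s) \<partial>rf_step E V p (I, R))
      \<le> ennreal (exp (\<alpha> * real (card R + card I) + p * (exp \<beta> - 1) * real (card ?N)))"
    using assms(1,3) p_nonneg p_le_1 by (intro nn_integral_sir_potential_rf_step finite_V)
  also have "\<dots> \<le> ennreal (sir_potential \<alpha> \<beta> (I, R))"
  proof (rule ennreal_leI)
    have e: "0 \<le> p * (exp \<beta> - 1)" using assms(1) p_nonneg by simp
    have "p * (exp \<beta> - 1) * real (card ?N) \<le> p * (exp \<beta> - 1) * (real (d - 1) * real (card I))"
      using card_exposed_edges_le_pred[OF assms(3,4)] e
      by (intro mult_left_mono) (simp_all flip: of_nat_mult)
    also have "\<dots> = (real (d - 1) * p) * (exp \<beta> - 1) * real (card I)" by (simp add: algebra_simps)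
    also have "\<dots> \<le> (1 - \<epsilon>) * (exp \<beta> - 1) * real (card I)"
      using pred_d_mult_p_le assms(1) by (intro mult_right_mono) auto
    also have "\<dots> \<le> (\<beta> - \<alpha>) * real (card I)"
      using assms(2) by (intro mult_right_mono) auto
    finally show "exp (\<alpha> * real (card R + card I) + p * (exp \<beta> - 1) * real (card ?N))
        \<le> sir_potential \<alpha> \<beta> (I, R)"
      by (simp add: sir_potential_def algebra_simps)
  qed
  finally show ?thesis .
qed

lemma sir_potential_rf_step_initial:
  assumes "0 \<le> \<beta>"
  shows "(\<integral>\<^sup>+s. ennreal (sir_potential \<alpha> \<beta> s) \<partial>rf_step E V p (I0, {}))
      \<le> ennreal (exp ((\<alpha> + 2 * (exp \<beta> - 1)) * real (card I0)))"
proof -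
  let ?N = "exposed_edges E V I0 {}"
  have "(\<integral>\<^sup>+s. ennreal (sir_potential \<alpha> \<beta> s) \<partial>rf_step E V p (I0, {}))
      \<le> ennreal (exp (\<alpha> * real (card I0) + p * (exp \<beta> - 1) * real (card ?N)))"
    using nn_integral_sir_potential_rf_step[OF finite_V sir_config_initial p_nonneg p_le_1 assms]
    by simp
  also have "\<dots> \<le> ennreal (exp ((\<alpha> + 2 * (exp \<beta> - 1)) * real (card I0)))"
  proof (rule ennreal_leI)
    have e: "0 \<le> p * (exp \<beta> - 1)" using assms(1) p_nonneg by simp
    have "p * (exp \<beta> - 1) * real (card ?N) \<le> p * (exp \<beta> - 1) * (real d * real (card I0))"
      using card_exposed_edges_initial e by (intro mult_left_mono) (simp_all flip: of_nat_mult)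
    also have "\<dots> = (real d * p) * (exp \<beta> - 1) * real (card I0)" by (simp add: algebra_simps)
    also have "\<dots> \<le> 2 * (exp \<beta> - 1) * real (card I0)"
      using d_mult_p_le_2 assms(1) by (intro mult_right_mono) auto
    finally show "exp (\<alpha> * real (card I0) + p * (exp \<beta> - 1) * real (card ?N))
        \<le> exp ((\<alpha> + 2 * (exp \<beta> - 1)) * real (card I0))"
      by (simp add: algebra_simps)
  qed
  finally show ?thesis .
qed

lemma nn_integral_sir_potential_le:
  assumes "0 \<le> \<beta>" "\<alpha> + (1 - \<epsilon>) * (exp \<beta> - 1) \<le> \<beta>"
  shows "(\<integral>\<^sup>+s. ennreal (sir_potential \<alpha> \<beta> s) \<partial>rf_state E V p I0 (Suc t))
      \<le> ennreal (exp ((\<alpha> + 2 * (exp \<beta> - 1)) * real (card I0)))"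
proof -
  have "(\<integral>\<^sup>+s. ennreal (sir_potential \<alpha> \<beta> s) \<partial>rf_state E V p I0 (Suc t))
      \<le> 1 ^ t * (\<integral>\<^sup>+s. ennreal (sir_potential \<alpha> \<beta> s) \<partial>rf_step E V p (I0, {}))"
    by (rule nn_integral_rf_state_le_pow) (simp add: sir_potential_rf_step_le[OF assms])
  also have "\<dots> \<le> ennreal (exp ((\<alpha> + 2 * (exp \<beta> - 1)) * real (card I0)))"
    using sir_potential_rf_step_initial[OF assms(1)] by simp
  finally show ?thesis .
qed

lemma prob_infectious_nonempty_le:
  "measure_pmf.prob (rf_state E V p I0 (Suc t)) {s. fst s \<noteq> {}} \<le> 2 * (1 - \<epsilon>) ^ t * real (card I0)"
proof -
  have "measure_pmf.prob (rf_state E V p I0 (Suc t)) {s. fst s \<noteq> {}} \<le> 2 * (1 - \<epsilon>) ^ t * real (card I0) / 1"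
  proof (rule pmf_Markov_inequality[where f = "\<lambda>s. real (card (fst s))"])
    fix s assume "s \<in> set_pmf (rf_state E V p I0 (Suc t))" "s \<in> {s. fst s \<noteq> {}}"
    then show "1 \<le> real (card (fst s))"
      using finite_infectious_rf_state[of "fst s" "snd s"] by (simp add: Suc_le_eq card_gt_0_iff)
  qed (use nn_integral_card_infectious_le \<epsilon>_le_1 in auto)
  then show ?thesis by simp
qed

lemma prob_outbreak_gt_le:
  assumes "0 \<le> \<beta>" "0 \<le> \<alpha>" "\<alpha> + (1 - \<epsilon>) * (exp \<beta> - 1) \<le> \<beta>"
  shows "measure_pmf.prob (rf_state E V p I0 (Suc t)) {s. K < real (card (fst s \<union> snd s))}
      \<le> exp ((\<alpha> + 2 * (exp \<beta> - 1)) * real (card I0)) / exp (\<alpha> * K)"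
proof (rule pmf_Markov_inequality[where f = "sir_potential \<alpha> \<beta>"])
  fix s :: "nat set \<times> nat set" assume "s \<in> {s. K < real (card (fst s \<union> snd s))}"
  have "0 \<le> (1 - \<epsilon>) * (exp \<beta> - 1)" using assms(1) \<epsilon>_le_1 by simp
  then have "\<alpha> \<le> \<beta>" using assms(3) by linarith
  have "\<alpha> * K \<le> \<alpha> * real (card (fst s \<union> snd s))"
    using \<open>s \<in> _\<close> assms(2) by (intro mult_left_mono) auto
  also have "\<dots> \<le> \<alpha> * (real (card (snd s)) + real (card (fst s)))"
    using assms(2) card_Un_le[of "fst s" "snd s"] by (intro mult_left_mono) (auto simp flip: of_nat_add)
  also have "\<dots> \<le> \<alpha> * real (card (snd s)) + \<beta> * real (card (fst s))"
    using \<open>\<alpha> \<le> \<beta>\<close> by (simp add: algebra_simps mult_right_mono)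
  finally show "exp (\<alpha> * K) \<le> sir_potential \<alpha> \<beta> s" by (simp add: sir_potential_def)
qed (use nn_integral_sir_potential_le[OF assms(1,3)] in \<open>auto simp: sir_potential_def\<close>)

lemma prob_extinct_with_small_outbreak_ge:
  assumes "0 \<le> \<beta>" "0 < \<alpha>" "\<alpha> + (1 - \<epsilon>) * (exp \<beta> - 1) \<le> \<beta>"
    and "5 \<le> \<epsilon> * C" "2 \<le> \<alpha> * C"
    and "4 \<le> card V" "\<alpha> + 2 * (exp \<beta> - 1) \<le> ln (card V)" "1 \<le> ln (card V)"
    and "I0 \<noteq> {}"
  shows "1 - real (card V) powr (- (1 / 2)) \<le> measure_pmf.prob (rf_state E V p I0 (nat \<lfloor>C * ln (real (card V))\<rfloor>))
      {(I, R). I = {} \<and> real (card (I \<union> R)) \<le> C * real (card I0) * ln (real (card V))}"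
proof -
  define n where "n = real (card V)"
  define m where "m = real (card I0)"
  define t where "t = nat \<lfloor>C * ln n\<rfloor> - 1"
  have "0 < \<epsilon> * C" using assms(4) by linarith
  then have "0 < C" using \<epsilon>_pos by (simp add: zero_less_mult_iff)
  then have "\<epsilon> * C \<le> C" using \<epsilon>_pos \<epsilon>_le_1 by (intro mult_left_le_one_le) auto
  then have "5 \<le> C" using assms(4) by linarith
  then have "5 * 1 \<le> C * ln n"
    using assms(8) unfolding n_def by (intro mult_mono) auto
  then have T: "nat \<lfloor>C * ln n\<rfloor> = Suc t" and t: "C * ln n - 2 \<le> real t"
    unfolding t_def by linarith+
  have n: "2 \<le> n" "0 < n" using assms(6) by (simp_all add: n_def)
  have "finite I0" using I0_subset finite_V by (rule finite_subset)
  then have m: "1 \<le> m" "m \<le> n"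
    using assms(9) I0_subset finite_V by (simp_all add: m_def n_def Suc_le_eq card_gt_0_iff card_mono)
  let ?M = "rf_state E V p I0 (Suc t)"
  let ?A = "{s. fst s \<noteq> {}}" and ?B = "{s. C * m * ln n < real (card (fst s \<union> snd s))}"
  define G :: "(nat set \<times> nat set) set"
    where "G = {(I, R). I = {} \<and> real (card (I \<union> R)) \<le> C * m * ln n}"
  have "measure_pmf.prob ?M ?A \<le> 2 * (1 - \<epsilon>) ^ t * m"
    unfolding m_def by (rule prob_infectious_nonempty_le)
  also have "\<dots> \<le> 1 / n"
    using m assms(8) unfolding n_def
    by (intro extinction_bound_le_inverse[OF \<epsilon>_pos \<epsilon>_le_1 assms(4) n(1)[unfolded n_def] _ t[unfolded n_def]]) auto
  finally have A: "measure_pmf.prob ?M ?A \<le> 1 / n" .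
  have "measure_pmf.prob ?M ?B \<le> exp ((\<alpha> + 2 * (exp \<beta> - 1)) * m) / exp (\<alpha> * (C * m * ln n))"
    unfolding m_def using assms(1-3) by (intro prob_outbreak_gt_le) auto
  also have "\<dots> \<le> 1 / n"
    using assms(7,8) m(1) n(2) unfolding n_def by (intro outbreak_bound_le_inverse[OF assms(2,5)]) auto
  finally have B: "measure_pmf.prob ?M ?B \<le> 1 / n" .
  have "1 - measure_pmf.prob ?M G = measure_pmf.prob ?M (UNIV - G)"
    using measure_pmf.prob_compl[of G ?M] by simp
  also have "\<dots> \<le> measure_pmf.prob ?M (?A \<union> ?B)"
    by (intro measure_pmf.finite_measure_mono) (auto simp: G_def)
  also have "\<dots> \<le> measure_pmf.prob ?M ?A + measure_pmf.prob ?M ?B"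
    by (rule measure_Un_le) auto
  also have "\<dots> \<le> 2 / n"
    using A B by simp
  also have "\<dots> \<le> n powr (- (1 / 2))"
    using assms(6) unfolding n_def by (intro two_div_le_powr_neg_half) simp
  finally show ?thesis
    using T by (simp add: G_def m_def n_def)
qed

end

section \<open>Choice of the constants\<close>

lemma potential_parameters_exist:
  fixes \<epsilon> :: real
  assumes "0 < \<epsilon>" "\<epsilon> \<le> 1"
  obtains \<alpha> \<beta> where "0 < \<alpha>" "0 \<le> \<beta>" "\<alpha> + (1 - \<epsilon>) * (exp \<beta> - 1) \<le> \<beta>"
proof
  define \<delta> where "\<delta> = \<epsilon> / 2"
  have \<delta>: "0 < \<delta>" "\<delta> \<le> 1" and \<epsilon>: "\<epsilon> = 2 * \<delta>" using assms by (auto simp: \<delta>_def)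
  have "\<delta> - \<delta>\<^sup>2 \<le> ln (1 + \<delta>)" using \<delta> by (intro ln_one_plus_pos_lower_bound) auto
  moreover have "(1 - \<epsilon>) * \<delta> = \<delta> - 2 * \<delta>\<^sup>2" by (simp add: \<epsilon> power2_eq_square algebra_simps)
  moreover have "0 < \<delta>\<^sup>2" using \<delta> by simp
  ultimately show "0 < ln (1 + \<delta>) - (1 - \<epsilon>) * \<delta>" by linarith
  show "0 \<le> ln (1 + \<delta>)" using \<delta> by simp
  show "ln (1 + \<delta>) - (1 - \<epsilon>) * \<delta> + (1 - \<epsilon>) * (exp (ln (1 + \<delta>)) - 1) \<le> ln (1 + \<delta>)"
    using \<delta> by simp
qed

lemma pred_mult_le_of_less_divide:
  fixes d :: nat and p \<epsilon> e :: real
  assumes "2 \<le> d" "p < (1 - \<epsilon>) / (real d - 1)" "e \<le> \<epsilon>"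
  shows "real (d - 1) * p \<le> 1 - e"
proof -
  have "0 < real d - 1" using assms(1) by simp
  then have "(real d - 1) * p < 1 - \<epsilon>" using assms(2) by (simp add: field_simps)
  then show ?thesis using assms(1,3) by (simp add: of_nat_diff)
qed

lemma le_ln_of_ceiling_exp_le:
  fixes N :: nat
  assumes "nat \<lceil>exp x\<rceil> + 4 \<le> N"
  shows "4 \<le> real N" "x \<le> ln (real N)"
proof -
  have "exp x \<le> real N" using assms by linarith
  then show "x \<le> ln (real N)" by (metis exp_gt_zero less_le_trans ln_ge_iff)
qed (use assms in linarith)

theorem mainTheorem3:
  fixes \<epsilon> :: real
  assumes "\<epsilon> > 0"
  shows "\<exists>C>0. \<exists>c>0. \<exists>n0::nat. \<forall>(d::nat) (V::nat set) (E::nat \<Rightarrow> nat \<Rightarrow> bool) (p::real) (I0::nat set).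
    d \<ge> 2 \<and> finite V \<and> card V \<ge> n0
    \<and> (\<forall>u v. E u v \<longrightarrow> u \<in> V \<and> v \<in> V \<and> u \<noteq> v \<and> E v u)
    \<and> (\<forall>v\<in>V. card {u \<in> V. E v u} \<le> d)
    \<and> 0 \<le> p \<and> p < (1 - \<epsilon>) / (real d - 1)
    \<and> I0 \<subseteq> V \<and> I0 \<noteq> {}
    \<longrightarrow> measure_pmf.prob (rf_state E V p I0 (nat \<lfloor>C * ln (real (card V))\<rfloor>))
          {(I, R). I = {} \<and> real (card (I \<union> R)) \<le> C * real (card I0) * ln (real (card V))}
        \<ge> 1 - real (card V) powr (- c)"
proof -
  define e where "e = min \<epsilon> 1"
  have e: "0 < e" "e \<le> 1" "e \<le> \<epsilon>" using assms by (auto simp: e_def)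
  obtain \<alpha> \<beta> where \<alpha>\<beta>: "0 < \<alpha>" "0 \<le> \<beta>" "\<alpha> + (1 - e) * (exp \<beta> - 1) \<le> \<beta>"
    using potential_parameters_exist[OF e(1,2)] by blast
  define C where "C = 5 / e + 2 / \<alpha>"
  have "e * C = 5 + 2 * e / \<alpha>" "\<alpha> * C = 5 * \<alpha> / e + 2"
    using e(1) \<alpha>\<beta>(1) by (simp_all add: C_def distrib_left)
  moreover have "0 < C" unfolding C_def using e(1) \<alpha>\<beta>(1) by (intro add_pos_pos divide_pos_pos) auto
  ultimately have C: "0 < C" "5 \<le> e * C" "2 \<le> \<alpha> * C"
    using e(1) \<alpha>\<beta>(1) by simp_all
  define n0 where "n0 = nat \<lceil>exp (max (\<alpha> + 2 * (exp \<beta> - 1)) 1)\<rceil> + 4"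
  have instance_bound: "1 - real (card V) powr (- (1 / 2)) \<le> measure_pmf.prob (rf_state E V p I0 (nat \<lfloor>C * ln (real (card V))\<rfloor>))
      {(I, R). I = {} \<and> real (card (I \<union> R)) \<le> C * real (card I0) * ln (real (card V))}"
    if "d \<ge> 2" "finite V" "card V \<ge> n0" "\<forall>u v. E u v \<longrightarrow> u \<in> V \<and> v \<in> V \<and> u \<noteq> v \<and> E v u"
      "\<forall>v\<in>V. card {u \<in> V. E v u} \<le> d" "0 \<le> p" "p < (1 - \<epsilon>) / (real d - 1)" "I0 \<subseteq> V" "I0 \<noteq> {}"
    for d V E p I0
  proof -
    interpret reed_frost E V p I0 d e
      using that e pred_mult_le_of_less_divide by unfold_locales auto
    show ?thesis
      using prob_extinct_with_small_outbreak_ge[OF \<alpha>\<beta>(2,1,3) C(2,3)] le_ln_of_ceiling_exp_le[OF that(3)[unfolded n0_def]] that(9)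
      by simp
  qed
  show ?thesis
    apply (rule exI[where x = C], rule conjI[OF C(1)])
    apply (rule exI[where x = "1 / 2"], rule conjI, simp)
    apply (rule exI[where x = n0], intro allI impI, elim conjE)
    by (rule instance_bound)
qed

end
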